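(* Let $\mathcal{G}=(G,\odot,\leq)$ be a real continuous Alo-group with $G$ an open interval of $\mathbb{R}$ and identity $e$. The function $d_{[\mathcal{G}]}:[G]\times[G]\to G$, $$d_{[\mathcal{G}]}(\tilde a,\tilde b)=\max\{\|a^-\div b^-\|_{\mathcal{G}},\ \|a^+\div b^+\|_{\mathcal{G}}\}$$ (the $[\mathcal{G}]$-norm of the pair $[a^-\div b^-,a^+\div b^+]$), is a $[\mathcal{G}]$-distance, i.e. for all $\tilde a,\tilde b,\tilde c\in[G]$: (1) $d_{[\mathcal{G}]}(\tilde a,\tilde b)\geq e$; (2) $d_{[\mathcal{G}]}(\tilde a,\tilde b)=e\iff\tilde a=\tilde b$; (3) $d_{[\mathcal{G}]}(\tilde a,\tilde b)=d_{[\mathcal{G}]}(\tilde b,\tilde a)$; (4) $d_{[\mathcal{G}]}(\tilde a,\tilde b)\leq d_{[\mathcal{G}]}(\tilde a,\tilde c)\odot d_{[\mathcal{G}]}(\tilde c,\tilde b)$.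
   Context: An Alo-group $(G,\odot,\leq)$ is an Abelian group with a weak order $\leq$ such that $a\leq b\Rightarrow a\odot c\leq b\odot c$; real means $G\subseteq\mathbb{R}$ with the usual order, continuous means $\odot$ is continuous. $a^{(-1)}$ is the inverse of $a$, $a\div b=a\odot b^{(-1)}$, and $\|a\|_{\mathcal{G}}=\max\{a,a^{(-1)}\}$. $[G]=\{[a^-,a^+]: a^-,a^+\in G,\ a^-\leq a^+\}$, with $\tilde a=[a^-,a^+]$ etc.; two intervals are equal iff both endpoints coincide. *)

theory Defs
  imports "HOL-Analysis.Analysis"
begin

definition real_alo_group ::
  "real set \<Rightarrow> (real \<Rightarrow> real \<Rightarrow> real) \<Rightarrow> real \<Rightarrow> (real \<Rightarrow> real) \<Rightarrow> bool" where
  "real_alo_group G op e iv \<longleftrightarrow>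
     (\<forall>a\<in>G. \<forall>b\<in>G. op a b \<in> G) \<and>
     (\<forall>a\<in>G. \<forall>b\<in>G. \<forall>c\<in>G. op (op a b) c = op a (op b c)) \<and>
     (\<forall>a\<in>G. \<forall>b\<in>G. op a b = op b a) \<and>
     e \<in> G \<and> (\<forall>a\<in>G. op a e = a) \<and>
     (\<forall>a\<in>G. iv a \<in> G \<and> op a (iv a) = e) \<and>
     (\<forall>a\<in>G. \<forall>b\<in>G. \<forall>c\<in>G. a \<le> b \<longrightarrow> op a c \<le> op b c)"

definition continuous_op :: "real set \<Rightarrow> (real \<Rightarrow> real \<Rightarrow> real) \<Rightarrow> bool" where
  "continuous_op G op \<longleftrightarrow> continuous_on (G \<times> G) (\<lambda>(x, y). op x y)"

definition gdiv :: "(real \<Rightarrow> real \<Rightarrow> real) \<Rightarrow> (real \<Rightarrow> real) \<Rightarrow> real \<Rightarrow> real \<Rightarrow> real" where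
  "gdiv op iv a b = op a (iv b)"

definition gnorm :: "(real \<Rightarrow> real) \<Rightarrow> real \<Rightarrow> real" where
  "gnorm iv a = max a (iv a)"

text \<open>Intervals [a^-, a^+] of [G] are represented as pairs (a^-, a^+) with a^- \<le> a^+.\<close>
definition intervals :: "real set \<Rightarrow> (real \<times> real) set" where
  "intervals G = {(am, ap). am \<in> G \<and> ap \<in> G \<and> am \<le> ap}"

definition dist_I ::
  "(real \<Rightarrow> real \<Rightarrow> real) \<Rightarrow> (real \<Rightarrow> real) \<Rightarrow> real \<times> real \<Rightarrow> real \<times> real \<Rightarrow> real" where
  "dist_I op iv A B =
     max (gnorm iv (gdiv op iv (fst A) (fst B))) (gnorm iv (gdiv op iv (snd A) (snd B)))"

end

theory Submission
  imports Defs
begin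

text \<open>The group norm \<open>max {a, a\<inverse>}\<close> is \<open>\<ge> e\<close>, vanishes only at \<open>e\<close>, is invariant under
  inversion and is subadditive by monotonicity of \<open>\<odot>\<close>. Since \<open>a \<div> b = (a \<div> c) \<odot> (c \<div> b)\<close>
  and \<open>(a \<div> b)\<inverse> = b \<div> a\<close>, the map \<open>(a, b) \<mapsto> \<parallel>a \<div> b\<parallel>\<close> is a \<open>G\<close>-valued metric on \<open>G\<close>,
  and the maximum of two such metrics on the endpoints is again one.\<close>

locale alo_group =
  fixes G :: "real set" and op :: "real \<Rightarrow> real \<Rightarrow> real" and e :: real and iv :: "real \<Rightarrow> real"
  assumes alo: "real_alo_group G op e iv"
begin

lemma closed: "a \<in> G \<Longrightarrow> b \<in> G \<Longrightarrow> op a b \<in> G"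
  and assoc: "a \<in> G \<Longrightarrow> b \<in> G \<Longrightarrow> c \<in> G \<Longrightarrow> op (op a b) c = op a (op b c)"
  and commute: "a \<in> G \<Longrightarrow> b \<in> G \<Longrightarrow> op a b = op b a"
  and neutral_in: "e \<in> G"
  and right_neutral: "a \<in> G \<Longrightarrow> op a e = a"
  and inverse_in: "a \<in> G \<Longrightarrow> iv a \<in> G"
  and right_inverse: "a \<in> G \<Longrightarrow> op a (iv a) = e"
  and mono_left: "a \<in> G \<Longrightarrow> b \<in> G \<Longrightarrow> c \<in> G \<Longrightarrow> a \<le> b \<Longrightarrow> op a c \<le> op b c"
  using alo unfolding real_alo_group_def by blast+

lemma left_neutral: "a \<in> G \<Longrightarrow> op e a = a"
  using right_neutral commute neutral_in by metis

lemma left_inverse: "a \<in> G \<Longrightarrow> op (iv a) a = e"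
  using right_inverse commute inverse_in by metis

lemma mono:
  assumes "a \<in> G" "b \<in> G" "c \<in> G" "d \<in> G" "a \<le> b" "c \<le> d"
  shows "op a c \<le> op b d"
proof -
  have "op a c \<le> op b c" using mono_left assms by blast
  also have "\<dots> = op c b" using commute assms by blast
  also have "\<dots> \<le> op d b" using mono_left assms by blast
  also have "\<dots> = op b d" using commute assms by blast
  finally show ?thesis .
qed

lemma inverse_unique:
  assumes "a \<in> G" "b \<in> G" "op a b = e"
  shows "iv a = b"
proof -
  have "iv a = op (iv a) (op a b)" using assms right_neutral inverse_in by simp
  also have "\<dots> = op (op (iv a) a) b" using assms assoc inverse_in by simp
  also have "\<dots> = b" using assms left_inverse left_neutral by simp
  finally show ?thesis .
qed

lemma inverse_inverse: "a \<in> G \<Longrightarrow> iv (iv a) = a"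
  using inverse_unique inverse_in left_inverse by blast

lemma inverse_neutral: "iv e = e"
  using inverse_unique neutral_in right_neutral by blast

lemma inverse_op:
  assumes "a \<in> G" "b \<in> G"
  shows "iv (op a b) = op (iv a) (iv b)"
proof (rule inverse_unique)
  have "op (op a b) (op (iv a) (iv b)) = op (op a (iv a)) (op b (iv b))"
    using assms assoc commute closed inverse_in by metis
  then show "op (op a b) (op (iv a) (iv b)) = e"
    using assms right_inverse left_neutral neutral_in by simp
qed (use assms closed inverse_in in auto)

lemma gdiv_in: "a \<in> G \<Longrightarrow> b \<in> G \<Longrightarrow> gdiv op iv a b \<in> G"
  unfolding gdiv_def using closed inverse_in by blast

lemma gdiv_eq_neutral_iff:
  assumes "a \<in> G" "b \<in> G"
  shows "gdiv op iv a b = e \<longleftrightarrow> a = b"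
proof
  assume "gdiv op iv a b = e"
  then have "iv a = iv b" using assms inverse_unique inverse_in unfolding gdiv_def by simp
  then show "a = b" using assms inverse_inverse by metis
qed (simp add: gdiv_def right_inverse assms)

lemma inverse_gdiv: "a \<in> G \<Longrightarrow> b \<in> G \<Longrightarrow> iv (gdiv op iv a b) = gdiv op iv b a"
  unfolding gdiv_def using inverse_op inverse_in inverse_inverse commute by simp

lemma gdiv_trans:
  assumes "a \<in> G" "b \<in> G" "c \<in> G"
  shows "op (gdiv op iv a c) (gdiv op iv c b) = gdiv op iv a b"
proof -
  have "op (op a (iv c)) (op c (iv b)) = op a (op (op (iv c) c) (iv b))"
    using assms assoc closed inverse_in by simp
  then show ?thesis unfolding gdiv_def using assms left_inverse left_neutral inverse_in by simp
qed

lemma gnorm_in: "a \<in> G \<Longrightarrow> gnorm iv a \<in> G"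
  unfolding gnorm_def max_def using inverse_in by simp

lemma gnorm_inverse: "a \<in> G \<Longrightarrow> gnorm iv (iv a) = gnorm iv a"
  unfolding gnorm_def using inverse_inverse by (simp add: max.commute)

lemma neutral_le_inverse_if_le_neutral:
  assumes "a \<in> G" "a \<le> e"
  shows "e \<le> iv a"
proof -
  have "op a (iv a) \<le> op e (iv a)" using assms mono_left neutral_in inverse_in by simp
  then show ?thesis using assms right_inverse left_neutral inverse_in by simp
qed

lemma gnorm_ge_neutral: "a \<in> G \<Longrightarrow> e \<le> gnorm iv a"
  unfolding gnorm_def using neutral_le_inverse_if_le_neutral by fastforce

lemma gnorm_eq_neutral_iff:
  assumes "a \<in> G"
  shows "gnorm iv a = e \<longleftrightarrow> a = e"
proof
  assume "gnorm iv a = e"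
  then have "a \<le> e" "iv a \<le> e" unfolding gnorm_def by auto
  then have "iv a = e" using assms neutral_le_inverse_if_le_neutral by fastforce
  then show "a = e" using assms inverse_inverse inverse_neutral by metis
qed (simp add: gnorm_def inverse_neutral)

lemma gnorm_op_le: "a \<in> G \<Longrightarrow> b \<in> G \<Longrightarrow> gnorm iv (op a b) \<le> op (gnorm iv a) (gnorm iv b)"
  using mono[of a "gnorm iv a" b "gnorm iv b"] mono[of "iv a" "gnorm iv a" "iv b" "gnorm iv b"]
    gnorm_in inverse_in inverse_op
  by (simp add: gnorm_def)

lemma gnorm_gdiv_commute: "a \<in> G \<Longrightarrow> b \<in> G \<Longrightarrow> gnorm iv (gdiv op iv a b) = gnorm iv (gdiv op iv b a)"
  using gnorm_inverse gdiv_in inverse_gdiv by metis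

lemma gnorm_gdiv_triangle:
  "a \<in> G \<Longrightarrow> b \<in> G \<Longrightarrow> c \<in> G \<Longrightarrow>
    gnorm iv (gdiv op iv a b) \<le> op (gnorm iv (gdiv op iv a c)) (gnorm iv (gdiv op iv c b))"
  using gdiv_trans gnorm_op_le gdiv_in by metis

lemma dist_I_ge_neutral: "A \<in> G \<times> G \<Longrightarrow> B \<in> G \<times> G \<Longrightarrow> e \<le> dist_I op iv A B"
  unfolding dist_I_def using gnorm_ge_neutral gdiv_in by (auto simp: le_max_iff_disj)

lemma dist_I_eq_neutral_iff:
  assumes "A \<in> G \<times> G" "B \<in> G \<times> G"
  shows "dist_I op iv A B = e \<longleftrightarrow> A = B"
proof -
  have "e \<le> gnorm iv (gdiv op iv (fst A) (fst B))" "e \<le> gnorm iv (gdiv op iv (snd A) (snd B))"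
    using assms gnorm_ge_neutral gdiv_in by auto
  then have "dist_I op iv A B = e \<longleftrightarrow>
      gnorm iv (gdiv op iv (fst A) (fst B)) = e \<and> gnorm iv (gdiv op iv (snd A) (snd B)) = e"
    unfolding dist_I_def by (auto simp: max_def)
  also have "\<dots> \<longleftrightarrow> fst A = fst B \<and> snd A = snd B"
    using assms by (simp add: mem_Times_iff gnorm_eq_neutral_iff gdiv_eq_neutral_iff gdiv_in)
  finally show ?thesis by (simp add: prod_eq_iff)
qed

lemma dist_I_commute: "A \<in> G \<times> G \<Longrightarrow> B \<in> G \<times> G \<Longrightarrow> dist_I op iv A B = dist_I op iv B A"
  unfolding dist_I_def using gnorm_gdiv_commute by auto

lemma dist_I_triangle:
  assumes "A \<in> G \<times> G" "B \<in> G \<times> G" "C \<in> G \<times> G"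
  shows "dist_I op iv A B \<le> op (dist_I op iv A C) (dist_I op iv C B)"
proof -
  let ?d = "\<lambda>x y. gnorm iv (gdiv op iv x y)"
  have dist_I_in: "dist_I op iv X Y \<in> G" if "X \<in> G \<times> G" "Y \<in> G \<times> G" for X Y
    using that gnorm_in gdiv_in by (auto simp: dist_I_def max_def)
  have "?d (f A) (f B) \<le> op (dist_I op iv A C) (dist_I op iv C B)" if "f = fst \<or> f = snd" for f
  proof -
    have f_in: "f A \<in> G" "f B \<in> G" "f C \<in> G" using that assms by auto
    have "?d (f A) (f C) \<le> dist_I op iv A C" "?d (f C) (f B) \<le> dist_I op iv C B"
      using that by (auto simp: dist_I_def)
    moreover have "?d (f A) (f B) \<le> op (?d (f A) (f C)) (?d (f C) (f B))"
      using f_in gnorm_gdiv_triangle by blast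
    ultimately show ?thesis
      using mono f_in assms dist_I_in gnorm_in gdiv_in order_trans by metis
  qed
  then show ?thesis unfolding dist_I_def by simp
qed

end

lemma intervals_subset: "intervals G \<subseteq> G \<times> G"
  unfolding intervals_def by auto

theorem proposition7:
  fixes G :: "real set" and op :: "real \<Rightarrow> real \<Rightarrow> real" and e :: real and iv :: "real \<Rightarrow> real"
  assumes "real_alo_group G op e iv"
    and "continuous_op G op"
    and "open G" and "is_interval G" and "G \<noteq> {}"
  shows "\<forall>A\<in>intervals G. \<forall>B\<in>intervals G. \<forall>C\<in>intervals G.
           dist_I op iv A B \<ge> e \<and>
           (dist_I op iv A B = e \<longleftrightarrow> A = B) \<and>
           dist_I op iv A B = dist_I op iv B A \<and>
           dist_I op iv A B \<le> op (dist_I op iv A C) (dist_I op iv C B)"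
proof -
  interpret alo_group G op e iv using assms(1) by unfold_locales
  show ?thesis
    using intervals_subset dist_I_ge_neutral dist_I_eq_neutral_iff dist_I_commute dist_I_triangle
    by (meson subsetD)
qed

end
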